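(* For $k\ge1$, the linear simplex $\beta$ code $\mathcal{S}_k^\beta$ has type $\left(q^{(s-1)(k-1)}\frac{q^k-1}{q-1};k,0,\dots,0\right)$.
   Context: Let $R$ be a finite commutative chain ring with maximal ideal $\langle\gamma\rangle$, nilpotency index $s$ and residue field $R/\langle\gamma\rangle\cong\mathbb{F}_q$. Fix coset representatives $T=\{e_0,\dots,e_{q-1}\}$ with $e_0=0,e_1=1$, ordered $e_0<\dots<e_{q-1}$; each $r\in R$ is uniquely $\sum_{i=0}^{s-1}r_i\gamma^i$, $r_i\in T$; order $R$ by $x>y$ iff $x_i>y_i$ in $T$ for the largest $i$ with $x_i\neq y_i$; list $R=\{\rho_0,\dots,\rho_{q^s-1}\}$ increasingly. $\mathbf{a}^{(m)}$ is the constant vector of length $m$. Define $G_1^\alpha=(\rho_0\ \cdots\ \rho_{q^s-1})$ and, for $k>1$, $G_k^\alpha$ as the matrix of $q^s$ column blocks, the $j$-th having first row $\boldsymbol{\rho_j}^{(q^{s(k-1)})}$ and $G_{k-1}^\alpha$ below. List $\langle\gamma\rangle$ increasingly as $a_0\gamma<\dots<a_{q^{s-1}-1}\gamma$. Define $G_1^\beta=(1)$ and, for $k>1$, $G_k^\beta$ as the matrix with column blocks: first a block with first row $\mathbf{1}^{(q^{s(k-1)})}$ and $G_{k-1}^\alpha$ below; then for each $j=0,\dots,q^{s-1}-1$ a block with first row the constant vector with entry $a_j\gamma$ and $G_{k-1}^\beta$ below. $\mathcal{S}_k^\beta$ is the $R$-submodule generated by the rows of $G_k^\beta$. A linear code $\mathcal{C}\subseteq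 R^n$ has type $(n;t_1,\dots,t_s)$ if $\mathcal{C}\cong\bigoplus_{i=1}^s(R/\langle\gamma^{s-i+1}\rangle)^{t_i}$ as $R$-modules (the $t_i$ are unique); type $(n;k,0,\dots,0)$ means free of rank $k$. *)

theory Defs
  imports Main
begin

text \<open>Finite commutative chain ring R (a finite comm_ring_1 type) with maximal ideal
  generated by gam, nilpotency index s, and an ordered list es = [e_0,...,e_(q-1)]
  of coset representatives of R / gam R (so q = length es).\<close>

definition chain_ring_setup :: "'a::{comm_ring_1,finite} \<Rightarrow> nat \<Rightarrow> 'a list \<Rightarrow> bool" where
  "chain_ring_setup gam s es \<longleftrightarrow>
     \<comment> \<open>ideals form a chain (all ideals of a finite ring are f.g.; chain of principal ideals)\<close>
     (\<forall>a b::'a. a dvd b \<or> b dvd a) \<and>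
     \<comment> \<open>the maximal ideal (= set of non-units) is generated by gam\<close>
     (\<forall>x::'a. (\<not> x dvd 1) \<longleftrightarrow> gam dvd x) \<and>
     \<comment> \<open>nilpotency index s\<close>
     1 \<le> s \<and> gam ^ s = 0 \<and> gam ^ (s - 1) \<noteq> 0 \<and>
     \<comment> \<open>es is a complete, irredundant list of coset representatives, e_0 = 0, e_1 = 1\<close>
     2 \<le> length es \<and> es ! 0 = 0 \<and> es ! 1 = 1 \<and>
     (\<forall>i j. i < length es \<longrightarrow> j < length es \<longrightarrow> i \<noteq> j \<longrightarrow> \<not> gam dvd (es ! i - es ! j)) \<and>
     (\<forall>x::'a. \<exists>i < length es. gam dvd (x - es ! i))"

text \<open>Digit (index in es) of r at position i in the gam-adic expansion r = sum r_i gam^i.\<close>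
definition digits :: "'a::comm_ring_1 list \<Rightarrow> 'a \<Rightarrow> nat \<Rightarrow> 'a \<Rightarrow> nat \<Rightarrow> nat" where
  "digits es gam s r = (THE d. (\<forall>i<s. d i < length es) \<and> (\<forall>i\<ge>s. d i = 0) \<and>
        r = (\<Sum>i<s. es ! (d i) * gam ^ i))"

definition chain_less :: "'a::comm_ring_1 list \<Rightarrow> 'a \<Rightarrow> nat \<Rightarrow> 'a \<Rightarrow> 'a \<Rightarrow> bool" where
  "chain_less es gam s x y \<longleftrightarrow>
     (\<exists>i<s. digits es gam s x i < digits es gam s y i \<and>
        (\<forall>j. i < j \<and> j < s \<longrightarrow> digits es gam s x j = digits es gam s y j))"

definition rho :: "'a::{comm_ring_1,finite} list \<Rightarrow> 'a \<Rightarrow> nat \<Rightarrow> nat \<Rightarrow> 'a" where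
  "rho es gam s j = (THE r. card {x. chain_less es gam s x r} = j)"

definition rho_list :: "'a::{comm_ring_1,finite} list \<Rightarrow> 'a \<Rightarrow> nat \<Rightarrow> 'a list" where
  "rho_list es gam s = map (rho es gam s) [0..<card (UNIV :: 'a set)]"

definition ideal_elt :: "'a::{comm_ring_1,finite} list \<Rightarrow> 'a \<Rightarrow> nat \<Rightarrow> nat \<Rightarrow> 'a" where
  "ideal_elt es gam s j = (THE x. gam dvd x \<and> card {y. gam dvd y \<and> chain_less es gam s y x} = j)"

definition ideal_list :: "'a::{comm_ring_1,finite} list \<Rightarrow> 'a \<Rightarrow> nat \<Rightarrow> 'a list" where
  "ideal_list es gam s = map (ideal_elt es gam s) [0..<card {x::'a. gam dvd x}]"

text \<open>Matrices are lists of rows. stack c M: block with first row the constant vector c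
  (of length = number of columns of M) and M below. hcat: horizontal concatenation of blocks.\<close>
definition stack :: "'a \<Rightarrow> 'a list list \<Rightarrow> 'a list list" where
  "stack c M = replicate (length (hd M)) c # M"

definition hcat :: "'a list list list \<Rightarrow> 'a list list" where
  "hcat Bs = map (\<lambda>i. concat (map (\<lambda>B. B ! i) Bs)) [0..<length (hd Bs)]"

fun galpha :: "'a list \<Rightarrow> nat \<Rightarrow> 'a list list" where
  "galpha rs 0 = []"
| "galpha rs (Suc 0) = [rs]"
| "galpha rs (Suc (Suc k)) = hcat (map (\<lambda>r. stack r (galpha rs (Suc k))) rs)"

fun gbeta :: "'a::one list \<Rightarrow> 'a list \<Rightarrow> nat \<Rightarrow> 'a list list" where
  "gbeta rs gs 0 = []"
| "gbeta rs gs (Suc 0) = [[1]]"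
| "gbeta rs gs (Suc (Suc k)) =
     hcat (stack 1 (galpha rs (Suc k)) # map (\<lambda>g. stack g (gbeta rs gs (Suc k))) gs)"

definition G_alpha :: "'a::{comm_ring_1,finite} list \<Rightarrow> 'a \<Rightarrow> nat \<Rightarrow> nat \<Rightarrow> 'a list list" where
  "G_alpha es gam s k = galpha (rho_list es gam s) k"

definition G_beta :: "'a::{comm_ring_1,finite} list \<Rightarrow> 'a \<Rightarrow> nat \<Rightarrow> nat \<Rightarrow> 'a list list" where
  "G_beta es gam s k = gbeta (rho_list es gam s) (ideal_list es gam s) k"

text \<open>Vectors of R^n are functions nat => 'a vanishing at positions >= n.
  R-submodule of R^n generated by the rows of M (n = number of columns).\<close>
definition row_span :: "'a::comm_ring_1 list list \<Rightarrow> nat \<Rightarrow> (nat \<Rightarrow> 'a) set" where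
  "row_span M n = {v. \<exists>c::nat \<Rightarrow> 'a. \<forall>j. v j =
       (if j < n then (\<Sum>i<length M. c i * (M ! i ! j)) else 0)}"

definition S_beta :: "'a::{comm_ring_1,finite} list \<Rightarrow> 'a \<Rightarrow> nat \<Rightarrow> nat \<Rightarrow> (nat \<Rightarrow> 'a) set" where
  "S_beta es gam s k = row_span (G_beta es gam s k) (length (hd (G_beta es gam s k)))"

text \<open>Code type (n; t_1,...,t_s): t is the list [t_1,...,t_s]. C is isomorphic to
  the direct sum of (R/gam^(s-i+1))^(t_i): expressed as an R-linear surjection from
  the free module with basis {(i,l). i<s, l<t!i} onto C whose kernel is exactly
  {x. gam^(s-i) divides x(i,l)} (0-based i, so t!i = t_(i+1)).\<close>
definition code_type :: "'a::comm_ring_1 \<Rightarrow> nat \<Rightarrow> (nat \<Rightarrow> 'a) set \<Rightarrow> nat \<Rightarrow> nat list \<Rightarrow> bool" where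
  "code_type gam s C n t \<longleftrightarrow> length t = s \<and> C \<subseteq> {v. \<forall>j\<ge>n. v j = 0} \<and>
     (\<exists>\<phi> :: (nat \<times> nat \<Rightarrow> 'a) \<Rightarrow> (nat \<Rightarrow> 'a).
        let D = {x. \<forall>i l. \<not> (i < s \<and> l < t ! i) \<longrightarrow> x (i, l) = 0} in
        (\<forall>x\<in>D. \<forall>y\<in>D. \<forall>a. \<phi> (\<lambda>p. a * x p + y p) = (\<lambda>j. a * \<phi> x j + \<phi> y j)) \<and>
        \<phi> ` D = C \<and>
        (\<forall>x\<in>D. \<phi> x = (\<lambda>_. 0) \<longleftrightarrow> (\<forall>i<s. \<forall>l<t ! i. gam ^ (s - i) dvd x (i, l))))"

end

theory Submission
  imports Defs
begin

text \<open>Every element of R has a unique \<gamma>-adic expansion with digits in T, so |R| = q^s and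
  |\<gamma>R| = q^(s-1). These sizes fix the width n_k of G_k^\<beta> through the recurrence
  n_k = q^(s(k-1)) + q^(s-1) n_(k-1), whose solution is q^((s-1)(k-1)) (q^k - 1)/(q - 1).
  The expansions of 0 and 1 show that they are the two smallest elements of R, i.e.
  \<rho>_0 = 0 and \<rho>_1 = 1. The first block of G_k^\<beta> is a row of ones above G_(k-1)^\<alpha>, whose
  columns are all vectors over R; so G_k^\<beta> has the columns (1,0,...,0) and (1,u_l) for every
  unit vector u_l, and a vanishing R-combination of its rows has all coefficients zero.
  Hence the k rows are a basis of S_k^\<beta>, which is free of rank k.\<close>

fun adic_eval :: "'a::comm_ring_1 list \<Rightarrow> 'a \<Rightarrow> nat list \<Rightarrow> 'a" where
  "adic_eval es g [] = 0"
| "adic_eval es g (a # xs) = es ! a + g * adic_eval es g xs"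

lemma adic_eval_eq_sum: "adic_eval es g xs = (\<Sum>i<length xs. es ! (xs ! i) * g ^ i)"
  by (induction xs)
    (simp_all del: sum.lessThan_Suc add: sum.lessThan_Suc_shift sum_distrib_left algebra_simps)

definition digit_lists :: "'b list \<Rightarrow> nat \<Rightarrow> nat list set" where
  "digit_lists es m = {xs. set xs \<subseteq> {..<length es} \<and> length xs = m}"

lemma card_digit_lists: "card (digit_lists es m) = length es ^ m"
  unfolding digit_lists_def using card_lists_length_eq[of "{..<length es}" m] by simp

lemma digit_lists_0 [simp]: "digit_lists es 0 = {[]}"
  by (auto simp: digit_lists_def)

lemma Cons_in_digit_lists_iff [simp]:
  "a # xs \<in> digit_lists es (Suc m) \<longleftrightarrow> a < length es \<and> xs \<in> digit_lists es m"
  by (auto simp: digit_lists_def)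

lemma nth_digit_lists_less: "xs \<in> digit_lists es m \<Longrightarrow> i < m \<Longrightarrow> xs ! i < length es"
  unfolding digit_lists_def using nth_mem by blast

lemma digit_lists_SucE:
  assumes "xs \<in> digit_lists es (Suc m)"
  obtains a ys where "xs = a # ys" "a < length es" "ys \<in> digit_lists es m"
  using assms by (cases xs) (auto simp: digit_lists_def)

locale chain_ring =
  fixes gam :: "'a::{comm_ring_1,finite}" and s :: nat and es :: "'a list"
  assumes chain_ring_setup: "chain_ring_setup gam s es"
begin

lemma
  shows nonunit_iff_gam_dvd: "\<not> x dvd 1 \<longleftrightarrow> gam dvd x"
    and one_le_s: "1 \<le> s"
    and gam_pow_s: "gam ^ s = 0"
    and gam_pow_s_minus_1: "gam ^ (s - 1) \<noteq> 0"
    and two_le_length_es: "2 \<le> length es"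
    and es_0: "es ! 0 = 0"
    and es_1: "es ! 1 = 1"
    and es_distinct_mod_gam:
      "\<lbrakk>i < length es; j < length es; gam dvd es ! i - es ! j\<rbrakk> \<Longrightarrow> i = j"
    and es_complete_mod_gam: "\<exists>i < length es. gam dvd x - es ! i"
  using chain_ring_setup unfolding chain_ring_setup_def by auto

lemma zero_ne_one: "(0::'a) \<noteq> 1"
  using nonunit_iff_gam_dvd[of gam] by auto

lemma gam_pow_ne_zero: "p < s \<Longrightarrow> gam ^ p \<noteq> 0"
  using gam_pow_s_minus_1 power_add[of gam p "s - 1 - p"] by auto

lemma gam_dvd_if_gam_pow_mult_eq_0:
  assumes "p < s" "gam ^ p * x = 0"
  shows "gam dvd x"
proof (rule ccontr)
  assume "\<not> gam dvd x"
  then have "x dvd 1"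
    using nonunit_iff_gam_dvd by blast
  then obtain u where "1 = x * u"
    by (rule dvdE)
  then have "gam ^ p = gam ^ p * x * u"
    by (metis mult.assoc mult_1_right)
  with assms show False
    using gam_pow_ne_zero by simp
qed

lemma adic_expansion_exists: "\<exists>xs\<in>digit_lists es m. gam ^ m dvd x - adic_eval es gam xs"
proof (induction m arbitrary: x)
  case 0
  show ?case by simp
next
  case (Suc m)
  obtain a where a: "a < length es" "gam dvd x - es ! a"
    using es_complete_mod_gam by blast
  then obtain y where y: "x - es ! a = gam * y"
    by (auto elim: dvdE)
  obtain ys where ys: "ys \<in> digit_lists es m" "gam ^ m dvd y - adic_eval es gam ys"
    using Suc by blast
  have "x - adic_eval es gam (a # ys) = gam * (y - adic_eval es gam ys)"
    using y by (simp add: algebra_simps)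
  then have "gam ^ Suc m dvd x - adic_eval es gam (a # ys)"
    using ys(2) by (simp add: mult_dvd_mono)
  with a ys(1) show ?case
    by (intro bexI[of _ "a # ys"]) simp_all
qed

text \<open>The factor gam^p makes the induction go through: once the lowest digits agree, the
  remaining equation holds with gam^(p+1), and p + m \<le> s keeps gam^p nonzero.\<close>

lemma adic_eval_cancel:
  assumes "xs \<in> digit_lists es m" "ys \<in> digit_lists es m" "p + m \<le> s"
    and "gam ^ p * adic_eval es gam xs = gam ^ p * adic_eval es gam ys"
  shows "xs = ys"
  using assms
proof (induction m arbitrary: xs ys p)
  case 0
  then show ?case by simp
next
  case (Suc m)
  from Suc.prems(1) obtain a xs' where xs: "xs = a # xs'" "a < length es" "xs' \<in> digit_lists es m"
    by (rule digit_lists_SucE)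
  from Suc.prems(2) obtain b ys' where ys: "ys = b # ys'" "b < length es" "ys' \<in> digit_lists es m"
    by (rule digit_lists_SucE)
  let ?X = "adic_eval es gam xs'" and ?Y = "adic_eval es gam ys'"
  have "gam ^ p * (es ! a - es ! b + gam * (?X - ?Y)) = 0"
    using Suc.prems(4) unfolding xs ys by (simp add: algebra_simps)
  then have "gam dvd es ! a - es ! b + gam * (?X - ?Y)"
    using Suc.prems(3) by (intro gam_dvd_if_gam_pow_mult_eq_0) auto
  then have "gam dvd es ! a - es ! b"
    by (simp add: dvd_add_left_iff)
  then have "a = b"
    using es_distinct_mod_gam xs(2) ys(2) by blast
  then have "gam ^ Suc p * ?X = gam ^ Suc p * ?Y"
    using Suc.prems(4) unfolding xs ys by (simp add: algebra_simps)
  then have "xs' = ys'"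
    using Suc.IH[OF xs(3) ys(3), of "Suc p"] Suc.prems(3) by simp
  with \<open>a = b\<close> show ?case
    using xs ys by simp
qed

lemma bij_adic_eval: "bij_betw (adic_eval es gam) (digit_lists es s) UNIV"
proof (rule bij_betw_imageI)
  show "inj_on (adic_eval es gam) (digit_lists es s)"
    using adic_eval_cancel[where p = 0] by (auto intro: inj_onI)
  have "x \<in> adic_eval es gam ` digit_lists es s" for x
    using adic_expansion_exists[of s x] gam_pow_s by auto
  then show "adic_eval es gam ` digit_lists es s = UNIV"
    by blast
qed

lemma card_UNIV_eq: "card (UNIV :: 'a set) = length es ^ s"
  using bij_betw_same_card[OF bij_adic_eval] by (simp add: card_digit_lists)

lemma gam_dvd_digit_add_iff:
  assumes "a < length es"
  shows "gam dvd es ! a + gam * x \<longleftrightarrow> a = 0"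
proof -
  have "gam dvd es ! a + gam * x \<longleftrightarrow> gam dvd es ! a - es ! 0"
    by (simp add: es_0 dvd_add_left_iff)
  also have "\<dots> \<longleftrightarrow> a = 0"
    using es_distinct_mod_gam[of a 0] assms two_le_length_es by fastforce
  finally show ?thesis .
qed

lemma card_gam_multiples: "card {x::'a. gam dvd x} = length es ^ (s - 1)"
proof -
  obtain s' where s: "s = Suc s'"
    using one_le_s by (cases s) auto
  have "card {x::'a. gam dvd x} = card {xs \<in> digit_lists es s. gam dvd adic_eval es gam xs}"
    using bij_betw_same_card[OF bij_betw_Collect[OF bij_adic_eval]] by simp
  also have "{xs \<in> digit_lists es s. gam dvd adic_eval es gam xs} = Cons 0 ` digit_lists es s'"
    using two_le_length_es unfolding s
    by (auto elim!: digit_lists_SucE simp: gam_dvd_digit_add_iff es_0)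
  also have "card \<dots> = length es ^ (s - 1)"
    by (simp add: card_image card_digit_lists s)
  finally show ?thesis .
qed

lemma digits_eqI:
  assumes "\<forall>i<s. d i < length es" "\<forall>i\<ge>s. d i = 0" "r = (\<Sum>i<s. es ! d i * gam ^ i)"
  shows "digits es gam s r = d"
  unfolding digits_def
proof (rule the_equality)
  show "(\<forall>i<s. d i < length es) \<and> (\<forall>i\<ge>s. d i = 0) \<and> r = (\<Sum>i<s. es ! d i * gam ^ i)"
    using assms by blast
next
  fix d' assume d': "(\<forall>i<s. d' i < length es) \<and> (\<forall>i\<ge>s. d' i = 0) \<and> r = (\<Sum>i<s. es ! d' i * gam ^ i)"
  have "map d' [0..<s] = map d [0..<s]"
    using bij_betw_imp_inj_on[OF bij_adic_eval]
    by (rule inj_onD) (use assms d' in \<open>auto simp: adic_eval_eq_sum digit_lists_def\<close>)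
  then have "d' i = d i" for i
    using assms d' by (cases "i < s") (auto simp: map_eq_conv)
  then show "d' = d" ..
qed

lemma
  shows digits_expansion: "r = (\<Sum>i<s. es ! digits es gam s r i * gam ^ i)"
    and digits_eq_0_if_ge: "s \<le> i \<Longrightarrow> digits es gam s r i = 0"
proof -
  obtain xs where xs: "xs \<in> digit_lists es s" "adic_eval es gam xs = r"
    using bij_betw_imp_surj_on[OF bij_adic_eval] by (metis UNIV_I imageE)
  define d where "d i = (if i < s then xs ! i else 0)" for i
  have "digits es gam s r = d"
    by (rule digits_eqI) (use xs in \<open>auto simp: d_def adic_eval_eq_sum digit_lists_def nth_digit_lists_less\<close>)
  then show "r = (\<Sum>i<s. es ! digits es gam s r i * gam ^ i)"
    and "s \<le> i \<Longrightarrow> digits es gam s r i = 0"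
    using xs by (auto simp: d_def adic_eval_eq_sum digit_lists_def nth_digit_lists_less)
qed

lemma digits_inj: "digits es gam s x = digits es gam s y \<Longrightarrow> x = y"
  by (metis digits_expansion)

lemma digits_zero: "digits es gam s 0 = (\<lambda>_. 0)"
  by (rule digits_eqI) (use two_le_length_es one_le_s in \<open>auto simp: es_0\<close>)

lemma digits_one: "digits es gam s 1 = (\<lambda>i. if i = 0 then 1 else 0)"
proof (rule digits_eqI)
  have "(\<Sum>i<s. es ! (if i = 0 then 1 else 0) * gam ^ i) = (\<Sum>i<s. if i = 0 then 1 else 0)"
    by (intro sum.cong) (simp_all add: es_0 es_1[unfolded One_nat_def])
  then show "1 = (\<Sum>i<s. es ! (if i = 0 then 1 else 0) * gam ^ i)"
    using one_le_s by simp
qed (use two_le_length_es one_le_s in auto)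

abbreviation prec (infix "\<prec>" 50) where
  "x \<prec> y \<equiv> chain_less es gam s x y"

lemma chain_less_linear:
  assumes "x \<noteq> y"
  shows "x \<prec> y \<or> y \<prec> x"
proof -
  let ?dx = "digits es gam s x" and ?dy = "digits es gam s y"
  define I where "I = {i. i < s \<and> ?dx i \<noteq> ?dy i}"
  have "I \<noteq> {}"
  proof
    assume "I = {}"
    then have "?dx i = ?dy i" for i
      using digits_eq_0_if_ge unfolding I_def by (cases "i < s") auto
    then show False
      using assms digits_inj by blast
  qed
  then have "Max I \<in> I"
    unfolding I_def by (intro Max_in) simp_all
  then have top: "Max I < s" "?dx (Max I) \<noteq> ?dy (Max I)"
    unfolding I_def by simp_all
  have above: "\<forall>j. Max I < j \<and> j < s \<longrightarrow> ?dx j = ?dy j"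
    using Max_ge[of I] unfolding I_def by fastforce
  from top(2) consider "?dx (Max I) < ?dy (Max I)" | "?dy (Max I) < ?dx (Max I)"
    by linarith
  then show ?thesis
    using top(1) above unfolding chain_less_def by (cases; metis)
qed

lemma not_chain_less_zero: "\<not> x \<prec> 0"
  unfolding chain_less_def digits_zero by simp

lemma chain_less_one_imp_zero:
  assumes "x \<prec> 1"
  shows "x = 0"
proof -
  obtain i where i: "i < s" "digits es gam s x i < digits es gam s 1 i"
    and above: "\<forall>j. i < j \<and> j < s \<longrightarrow> digits es gam s x j = digits es gam s 1 j"
    using assms unfolding chain_less_def by blast
  have "i = 0" "digits es gam s x 0 = 0"
    using i unfolding digits_one by (auto split: if_splits)
  then have "digits es gam s x j = 0" for j
    using above digits_eq_0_if_ge unfolding digits_one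
    by (cases "j = 0"; cases "j < s") auto
  then have "digits es gam s x = digits es gam s 0"
    unfolding digits_zero by blast
  then show ?thesis
    by (rule digits_inj)
qed

lemma zero_chain_less: "x \<noteq> 0 \<Longrightarrow> 0 \<prec> x"
  using chain_less_linear not_chain_less_zero by blast

lemma one_chain_less: "x \<noteq> 0 \<Longrightarrow> x \<noteq> 1 \<Longrightarrow> 1 \<prec> x"
  using chain_less_linear chain_less_one_imp_zero by blast

lemma rho_0: "rho es gam s 0 = 0"
  unfolding rho_def
proof (rule the_equality)
  show "card {x. x \<prec> 0} = 0"
    using not_chain_less_zero by simp
next
  fix r assume "card {x. x \<prec> r} = 0"
  then show "r = 0"
    using zero_chain_less by (metis card_0_eq empty_iff finite mem_Collect_eq)
qed

lemma rho_1: "rho es gam s 1 = 1"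
  unfolding rho_def
proof (rule the_equality)
  have "{x. x \<prec> 1} = {0}"
    using chain_less_one_imp_zero zero_chain_less zero_ne_one by auto
  then show "card {x. x \<prec> 1} = 1"
    by simp
next
  fix r assume r: "card {x. x \<prec> r} = 1"
  show "r = 1"
  proof (rule ccontr)
    assume "r \<noteq> 1"
    moreover have "r \<noteq> 0"
      using r not_chain_less_zero by auto
    ultimately have "{0, 1} \<subseteq> {x. x \<prec> r}"
      using zero_chain_less one_chain_less by auto
    then have "card {0::'a, 1} \<le> card {x. x \<prec> r}"
      by (intro card_mono) simp_all
    then have "card {0::'a, 1} \<le> 1"
      using r by simp
    then show False
      using zero_ne_one by simp
  qed
qed

lemma length_rho_list: "length (rho_list es gam s) = length es ^ s"
  by (simp add: rho_list_def card_UNIV_eq)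

lemma length_ideal_list: "length (ideal_list es gam s) = length es ^ (s - 1)"
  by (simp add: ideal_list_def card_gam_multiples)

lemma zero_one_in_rho_list: "0 \<in> set (rho_list es gam s)" "1 \<in> set (rho_list es gam s)"
proof -
  have "length es \<le> card (UNIV :: 'a set)"
    using card_UNIV_eq one_le_s two_le_length_es by (simp add: self_le_power)
  then have "1 < card (UNIV :: 'a set)"
    using two_le_length_es by linarith
  then have "rho_list es gam s ! 0 = 0" "rho_list es gam s ! 1 = 1" "1 < length (rho_list es gam s)"
    by (simp_all add: rho_list_def rho_0 rho_1[unfolded One_nat_def])
  then show "0 \<in> set (rho_list es gam s)" "1 \<in> set (rho_list es gam s)"
    by (metis nth_mem less_trans zero_less_one)+
qed

end

definition is_matrix :: "nat \<Rightarrow> nat \<Rightarrow> 'a list list \<Rightarrow> bool" where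
  "is_matrix m n M \<longleftrightarrow> length M = m \<and> (\<forall>r\<in>set M. length r = n)"

definition has_column :: "'a list list \<Rightarrow> (nat \<Rightarrow> 'a) \<Rightarrow> bool" where
  "has_column M v \<longleftrightarrow> (\<exists>j < length (hd M). \<forall>i < length M. M ! i ! j = v i)"

lemma length_hd_if_is_matrix: "is_matrix m n M \<Longrightarrow> 0 < m \<Longrightarrow> length (hd M) = n"
  unfolding is_matrix_def by (metis hd_in_set length_greater_0_conv)

lemma length_hd_stack [simp]: "length (hd (stack c M)) = length (hd M)"
  by (simp add: stack_def)

lemma is_matrix_stack: "is_matrix m n M \<Longrightarrow> 0 < m \<Longrightarrow> is_matrix (Suc m) n (stack c M)"
  using length_hd_if_is_matrix[of m n M] unfolding is_matrix_def stack_def by auto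

lemma has_column_stack:
  assumes "M \<noteq> []" "has_column M v"
  shows "has_column (stack c M) (case_nat c v)"
proof -
  obtain j where j: "j < length (hd M)" "\<forall>i < length M. M ! i ! j = v i"
    using assms(2) unfolding has_column_def by blast
  have "stack c M ! i ! j = case_nat c v i" if "i < length (stack c M)" for i
    using j that by (cases i) (auto simp: stack_def)
  with j(1) show ?thesis
    unfolding has_column_def by auto
qed

lemma length_hcat_row:
  assumes "\<forall>B\<in>set Bs. is_matrix m (length (hd B)) B" "i < m"
  shows "length (concat (map (\<lambda>B. B ! i) Bs)) = (\<Sum>B\<leftarrow>Bs. length (hd B))"
proof -
  have "length (B ! i) = length (hd B)" if "B \<in> set Bs" for B
    using assms that unfolding is_matrix_def by auto
  then show ?thesis
    by (simp add: length_concat comp_def cong: map_cong)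
qed

lemma
  assumes "Bs \<noteq> []" "\<forall>B\<in>set Bs. is_matrix m (length (hd B)) B"
  shows length_hcat: "length (hcat Bs) = m"
    and nth_hcat: "i < m \<Longrightarrow> hcat Bs ! i = concat (map (\<lambda>B. B ! i) Bs)"
proof -
  have "length (hd Bs) = m"
    using assms by (simp add: is_matrix_def)
  then show "length (hcat Bs) = m" "i < m \<Longrightarrow> hcat Bs ! i = concat (map (\<lambda>B. B ! i) Bs)"
    by (simp_all add: hcat_def)
qed

lemma is_matrix_hcat:
  assumes "Bs \<noteq> []" "\<forall>B\<in>set Bs. is_matrix m (length (hd B)) B"
  shows "is_matrix m (\<Sum>B\<leftarrow>Bs. length (hd B)) (hcat Bs)"
  unfolding is_matrix_def
  using length_hcat[OF assms] nth_hcat[OF assms] length_hcat_row[OF assms(2)]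
  by (metis in_set_conv_nth)

lemma has_column_hcat:
  assumes "0 < m" "\<forall>B\<in>set Bs. is_matrix m (length (hd B)) B" "B \<in> set Bs" "has_column B v"
  shows "has_column (hcat Bs) v"
proof -
  obtain pre post where Bs: "Bs = pre @ B # post"
    using assms(3) by (meson split_list)
  obtain j where j: "j < length (hd B)" "\<forall>i < length B. B ! i ! j = v i"
    using assms(4) unfolding has_column_def by blast
  have mB: "is_matrix m (length (hd B)) B" and mpre: "\<forall>B\<in>set pre. is_matrix m (length (hd B)) B"
    using assms(2) Bs by auto
  define P where "P = (\<Sum>B\<leftarrow>pre. length (hd B))"
  have "hcat Bs ! i ! (P + j) = v i" if "i < m" for i
  proof -
    have "hcat Bs ! i ! (P + j) = (B ! i @ concat (map (\<lambda>B. B ! i) post)) ! j"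
      using nth_hcat[OF _ assms(2) that] length_hcat_row[OF mpre that] unfolding Bs P_def
      by (simp add: nth_append)
    also have "\<dots> = v i"
      using j mB that by (simp add: is_matrix_def nth_append)
    finally show ?thesis .
  qed
  moreover have "length (hd (hcat Bs)) = P + length (hd B) + (\<Sum>B\<leftarrow>post. length (hd B))"
    using length_hd_if_is_matrix[OF is_matrix_hcat[OF _ assms(2)] assms(1)] unfolding Bs P_def
    by simp
  ultimately show ?thesis
    unfolding has_column_def using j(1) length_hcat[OF _ assms(2)] Bs
    by (intro exI[of _ "P + j"]) auto
qed

lemma is_matrix_galpha: "rs \<noteq> [] \<Longrightarrow> is_matrix (Suc k) (length rs ^ Suc k) (galpha rs (Suc k))"
proof (induction k)
  case 0
  then show ?case by (simp add: is_matrix_def)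
next
  case (Suc k)
  let ?Bs = "map (\<lambda>r. stack r (galpha rs (Suc k))) rs"
  have "\<forall>B\<in>set ?Bs. is_matrix (Suc (Suc k)) (length rs ^ Suc k) B"
    using is_matrix_stack[OF Suc.IH[OF Suc.prems]] by auto
  then have "\<forall>B\<in>set ?Bs. is_matrix (Suc (Suc k)) (length (hd B)) B"
    using length_hd_if_is_matrix by fastforce
  from is_matrix_hcat[OF _ this] Suc.prems show ?case
    using length_hd_if_is_matrix[OF Suc.IH[OF Suc.prems]]
    by (simp add: comp_def sum_list_triv)
qed

lemma galpha_has_column: "\<forall>i<Suc k. v i \<in> set rs \<Longrightarrow> has_column (galpha rs (Suc k)) v"
proof (induction k arbitrary: v)
  case 0
  then obtain j where "j < length rs" "rs ! j = v 0"
    by (meson in_set_conv_nth zero_less_Suc)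
  then show ?case
    by (auto simp: has_column_def)
next
  case (Suc k)
  let ?G = "galpha rs (Suc k)"
  have rs: "rs \<noteq> []"
    using Suc.prems by auto
  have "has_column ?G (\<lambda>i. v (Suc i))"
    using Suc.IH Suc.prems by simp
  then have "has_column (stack (v 0) ?G) (case_nat (v 0) (\<lambda>i. v (Suc i)))"
    using is_matrix_galpha[OF rs, of k] by (intro has_column_stack) (auto simp: is_matrix_def)
  moreover have "case_nat (v 0) (\<lambda>i. v (Suc i)) = v"
    by (simp add: fun_eq_iff split: nat.split)
  ultimately have "has_column (stack (v 0) ?G) v"
    by simp
  moreover have blocks: "\<forall>B\<in>set (map (\<lambda>r. stack r ?G) rs). is_matrix (Suc (Suc k)) (length (hd B)) B"
    using is_matrix_stack[OF is_matrix_galpha[OF rs, of k]] length_hd_if_is_matrix[OF is_matrix_galpha[OF rs, of k]]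
    by auto
  moreover have "stack (v 0) ?G \<in> set (map (\<lambda>r. stack r ?G) rs)"
    using Suc.prems by auto
  ultimately show ?case
    using has_column_hcat[of "Suc (Suc k)" _ "stack (v 0) ?G" v] by simp
qed

lemma is_matrix_gbeta_Suc:
  assumes "rs \<noteq> []" "is_matrix (Suc k) w (gbeta rs gs (Suc k))"
  shows "is_matrix (Suc (Suc k)) (length rs ^ Suc k + length gs * w) (gbeta rs gs (Suc (Suc k)))"
proof -
  let ?A = "galpha rs (Suc k)" and ?G = "gbeta rs gs (Suc k)"
  let ?Bs = "stack 1 ?A # map (\<lambda>g. stack g ?G) gs"
  have "is_matrix (Suc (Suc k)) (length rs ^ Suc k) (stack 1 ?A)"
    "length (hd (stack 1 ?A)) = length rs ^ Suc k"
    using is_matrix_stack[OF is_matrix_galpha[OF assms(1)]]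
      length_hd_if_is_matrix[OF is_matrix_galpha[OF assms(1)]] by simp_all
  moreover have "is_matrix (Suc (Suc k)) w (stack g ?G)" "length (hd (stack g ?G)) = w" for g
    using is_matrix_stack[OF assms(2)] length_hd_if_is_matrix[OF assms(2)] by simp_all
  ultimately have "is_matrix (Suc (Suc k)) (\<Sum>B\<leftarrow>?Bs. length (hd B)) (hcat ?Bs)"
    by (intro is_matrix_hcat) auto
  with \<open>length (hd (stack 1 ?A)) = length rs ^ Suc k\<close> \<open>\<And>g. length (hd (stack g ?G)) = w\<close>
  show ?thesis
    by (simp add: comp_def sum_list_triv)
qed

lemma is_matrix_gbeta:
  assumes "rs \<noteq> []"
  shows "is_matrix (Suc k) (length (hd (gbeta rs gs (Suc k)))) (gbeta rs gs (Suc k))"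
proof (induction k)
  case 0
  then show ?case by (simp add: is_matrix_def)
next
  case (Suc k)
  from is_matrix_gbeta_Suc[OF assms Suc.IH] show ?case
    using length_hd_if_is_matrix by fastforce
qed

lemma length_hd_gbeta:
  assumes "rs \<noteq> []" "length rs = q * length gs"
  shows "length (hd (gbeta rs gs (Suc k))) = length gs ^ k * (\<Sum>i\<le>k. q ^ i)"
proof (induction k)
  case 0
  then show ?case by simp
next
  case (Suc k)
  have "length (hd (gbeta rs gs (Suc (Suc k))))
      = length rs ^ Suc k + length gs * length (hd (gbeta rs gs (Suc k)))"
    using length_hd_if_is_matrix[OF is_matrix_gbeta_Suc[OF assms(1) is_matrix_gbeta[OF assms(1)]]]
    by simp
  then show ?case
    using Suc.IH assms(2) by (simp add: power_mult_distrib algebra_simps)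
qed

lemma gbeta_has_column:
  assumes "rs \<noteq> []" "\<forall>i<Suc k. v i \<in> set rs"
  shows "has_column (gbeta rs gs (Suc (Suc k))) (case_nat 1 v)"
proof -
  let ?A = "galpha rs (Suc k)" and ?G = "gbeta rs gs (Suc k)"
  have "has_column (stack 1 ?A) (case_nat 1 v)"
    using galpha_has_column[OF assms(2)] is_matrix_galpha[OF assms(1), of k]
    by (intro has_column_stack) (auto simp: is_matrix_def)
  moreover have "\<forall>B\<in>set (stack 1 ?A # map (\<lambda>g. stack g ?G) gs). is_matrix (Suc (Suc k)) (length (hd B)) B"
    using is_matrix_stack[OF is_matrix_galpha[OF assms(1)]] length_hd_if_is_matrix[OF is_matrix_galpha[OF assms(1)]]
      is_matrix_stack[OF is_matrix_gbeta[OF assms(1)]]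
    by auto
  ultimately show ?thesis
    using has_column_hcat[of "Suc (Suc k)" _ "stack 1 ?A" "case_nat 1 v"] by simp
qed

definition rows_independent :: "'a::comm_ring_1 list list \<Rightarrow> nat \<Rightarrow> bool" where
  "rows_independent M n \<longleftrightarrow>
     (\<forall>c. (\<forall>j<n. (\<Sum>i<length M. c i * M ! i ! j) = 0) \<longrightarrow> (\<forall>i<length M. c i = 0))"

lemma lincomb_has_column:
  assumes "has_column M v" "is_matrix m n M" "0 < m"
  obtains j where "j < n" "(\<Sum>i<m. c i * M ! i ! j) = (\<Sum>i<m. c i * v i)"
proof -
  obtain j where j: "j < length (hd M)" "\<forall>i < length M. M ! i ! j = v i"
    using assms(1) unfolding has_column_def by blast
  then have "(\<Sum>i<m. c i * M ! i ! j) = (\<Sum>i<m. c i * v i)"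
    using assms(2) by (intro sum.cong) (auto simp: is_matrix_def)
  with j(1) length_hd_if_is_matrix[OF assms(2,3)] that show ?thesis
    by blast
qed

lemma rows_independent_gbeta:
  fixes rs :: "'a::comm_ring_1 list"
  assumes "0 \<in> set rs" "1 \<in> set rs"
  shows "rows_independent (gbeta rs gs (Suc k)) (length (hd (gbeta rs gs (Suc k))))"
proof (cases k)
  case 0
  then show ?thesis by (simp add: rows_independent_def)
next
  case (Suc k')
  let ?M = "gbeta rs gs (Suc (Suc k'))"
  have rs: "rs \<noteq> []"
    using assms by auto
  show ?thesis
    unfolding rows_independent_def Suc
  proof (rule allI, rule impI)
    fix c assume zero: "\<forall>j<length (hd ?M). (\<Sum>i<length ?M. c i * ?M ! i ! j) = 0"
    have lin: "c 0 + (\<Sum>i<Suc k'. c (Suc i) * v i) = 0" if v: "\<forall>i<Suc k'. v i \<in> set rs" for v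
    proof -
      obtain j where "j < length (hd ?M)"
        "(\<Sum>i<Suc (Suc k'). c i * ?M ! i ! j) = (\<Sum>i<Suc (Suc k'). c i * case_nat 1 v i)"
        using lincomb_has_column[OF gbeta_has_column[OF rs v] is_matrix_gbeta[OF rs]] by blast
      with zero is_matrix_gbeta[OF rs, of "Suc k'" gs] show ?thesis
        by (simp add: is_matrix_def sum.lessThan_Suc_shift del: sum.lessThan_Suc)
    qed
    have c0: "c 0 = 0"
      using lin[of "\<lambda>_. 0"] assms by simp
    have "c (Suc l) = 0" if "l < Suc k'" for l
      using lin[of "\<lambda>i. if i = l then 1 else 0"] assms c0 that
      by (simp add: if_distrib sum.delta cong: if_cong)
    with c0 show "\<forall>i<length ?M. c i = 0"
      using is_matrix_gbeta[OF rs, of "Suc k'" gs] by (auto simp: is_matrix_def less_Suc_eq_0_disj)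
  qed
qed

definition lincomb_rows :: "'a::comm_ring_1 list list \<Rightarrow> nat \<Rightarrow> (nat \<Rightarrow> 'a) \<Rightarrow> nat \<Rightarrow> 'a" where
  "lincomb_rows M n c = (\<lambda>j. if j < n then \<Sum>i<length M. c i * M ! i ! j else 0)"

lemma row_span_eq_range_lincomb_rows: "row_span M n = range (lincomb_rows M n)"
  by (auto simp: row_span_def lincomb_rows_def fun_eq_iff)

lemma lincomb_rows_cong:
  assumes "\<And>i. i < length M \<Longrightarrow> c i = c' i"
  shows "lincomb_rows M n c = lincomb_rows M n c'"
  unfolding lincomb_rows_def using assms by (auto intro!: sum.cong)

lemma lincomb_rows_eq_0_iff:
  assumes "rows_independent M n"
  shows "lincomb_rows M n c = (\<lambda>_. 0) \<longleftrightarrow> (\<forall>i<length M. c i = 0)"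
proof
  assume zero: "lincomb_rows M n c = (\<lambda>_. 0)"
  have "(\<Sum>i<length M. c i * M ! i ! j) = 0" if "j < n" for j
    using fun_cong[OF zero, of j] that by (simp add: lincomb_rows_def)
  with assms show "\<forall>i<length M. c i = 0"
    unfolding rows_independent_def by blast
qed (simp add: lincomb_rows_def fun_eq_iff)

lemma code_type_if_rows_independent:
  fixes M :: "'a::comm_ring_1 list list"
  assumes "gam ^ s = 0" "1 \<le> s" "rows_independent M n"
  shows "code_type gam s (row_span M n) n (length M # replicate (s - 1) 0)"
proof -
  let ?t = "length M # replicate (s - 1) (0::nat)"
  let ?D = "{x :: nat \<times> nat \<Rightarrow> 'a. \<forall>i l. \<not> (i < s \<and> l < ?t ! i) \<longrightarrow> x (i, l) = 0}"
  define \<phi> where "\<phi> x = lincomb_rows M n (\<lambda>i. x (0, i))" for x :: "nat \<times> nat \<Rightarrow> 'a"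
  have t: "l < ?t ! i \<longleftrightarrow> i = 0 \<and> l < length M" if "i < s" for i l
    using that by (cases i) auto
  have lin: "\<forall>x\<in>?D. \<forall>y\<in>?D. \<forall>a. \<phi> (\<lambda>p. a * x p + y p) = (\<lambda>j. a * \<phi> x j + \<phi> y j)"
    by (auto simp: \<phi>_def lincomb_rows_def fun_eq_iff sum.distrib sum_distrib_left algebra_simps)
  have "lincomb_rows M n c \<in> \<phi> ` ?D" for c
  proof
    define x :: "nat \<times> nat \<Rightarrow> 'a" where "x = (\<lambda>(i, l). if i = 0 \<and> l < length M then c l else 0)"
    show "x \<in> ?D"
      using assms(2) by (auto simp: x_def t)
    show "lincomb_rows M n c = \<phi> x"
      unfolding \<phi>_def x_def by (rule lincomb_rows_cong) simp
  qed
  then have image: "\<phi> ` ?D = row_span M n"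
    unfolding row_span_eq_range_lincomb_rows \<phi>_def by blast
  have kernel: "\<phi> x = (\<lambda>_. 0) \<longleftrightarrow> (\<forall>i<s. \<forall>l<?t ! i. gam ^ (s - i) dvd x (i, l))" for x
    using lincomb_rows_eq_0_iff[OF assms(3)] assms(1,2) t by (auto simp: \<phi>_def)
  show ?thesis
    unfolding code_type_def Let_def
  proof (intro conjI exI[of _ \<phi>])
    show "length ?t = s"
      using assms(2) by simp
    show "row_span M n \<subseteq> {v. \<forall>j\<ge>n. v j = 0}"
      unfolding row_span_def by (simp add: Collect_mono_iff) (metis not_less)
    show "\<forall>x\<in>?D. \<forall>y\<in>?D. \<forall>a. \<phi> (\<lambda>p. a * x p + y p) = (\<lambda>j. a * \<phi> x j + \<phi> y j)"
      by (fact lin)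
    show "\<phi> ` ?D = row_span M n"
      by (fact image)
    show "\<forall>x\<in>?D. \<phi> x = (\<lambda>_. 0) \<longleftrightarrow> (\<forall>i<s. \<forall>l<?t ! i. gam ^ (s - i) dvd x (i, l))"
      using kernel by blast
  qed
qed

lemma geometric_sum_nat:
  fixes q :: nat
  assumes "1 < q"
  shows "(\<Sum>i\<le>k. q ^ i) = (q ^ Suc k - 1) div (q - 1)"
proof -
  have "int (q ^ Suc k - 1) = int ((q - 1) * (\<Sum>i\<le>k. q ^ i))"
    using assms power_diff_1_eq[of "int q" "Suc k"] by (simp add: of_nat_diff lessThan_Suc_atMost)
  then have "q ^ Suc k - 1 = (q - 1) * (\<Sum>i\<le>k. q ^ i)"
    by (simp only: of_nat_eq_iff)
  then show ?thesis
    using assms by simp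
qed

theorem proposition3p2:
  fixes gam :: "'a::{comm_ring_1,finite}" and s k :: nat and es :: "'a list"
  assumes "chain_ring_setup gam s es"
    and "1 \<le> k"
  shows "length (hd (G_beta es gam s k))
           = length es ^ ((s - 1) * (k - 1)) * ((length es ^ k - 1) div (length es - 1))
         \<and> code_type gam s (S_beta es gam s k) (length (hd (G_beta es gam s k)))
             (k # replicate (s - 1) 0)"
proof -
  interpret chain_ring gam s es
    by (rule chain_ring.intro) (rule assms(1))
  obtain k' where k: "k = Suc k'"
    using assms(2) by (cases k) auto
  let ?rs = "rho_list es gam s" and ?gs = "ideal_list es gam s"
  have rs: "?rs \<noteq> []"
    using zero_one_in_rho_list by auto
  have "length es ^ s = length es * length es ^ (s - 1)"
    using one_le_s by (simp flip: power_Suc)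
  then have "length ?rs = length es * length ?gs"
    by (simp add: length_rho_list length_ideal_list)
  from length_hd_gbeta[OF rs this, of k']
  have width: "length (hd (G_beta es gam s k))
      = length es ^ ((s - 1) * (k - 1)) * ((length es ^ k - 1) div (length es - 1))"
    using geometric_sum_nat[of "length es" k'] two_le_length_es
    by (simp add: G_beta_def k length_ideal_list power_mult)
  have rows: "length (G_beta es gam s k) = k"
    using is_matrix_gbeta[OF rs, of k' ?gs] by (simp add: G_beta_def k is_matrix_def)
  have "rows_independent (G_beta es gam s k) (length (hd (G_beta es gam s k)))"
    using rows_independent_gbeta[OF zero_one_in_rho_list] by (simp add: G_beta_def k)
  from code_type_if_rows_independent[OF gam_pow_s one_le_s this]
  show ?thesis
    unfolding S_beta_def rows using width by blast
qed

end
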